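(* Let $G$ be an $(N,k)$ Adinkra with associated doubly even code $C$. Then $G$ has Klein flip degeneracy (i.e. the Adinkra obtained from $G$ by exchanging bosons and fermions is not equivalent to $G$) if and only if the all-ones word $(1,1,\dots,1)$ belongs to $C$. This in turn occurs only if $N\equiv 0\pmod 4$.
   Context: An Adinkra of dimension $N$ is a finite connected simple graph $G=(V,E)$ with: a bipartition of $V$ into bosons and fermions (every edge joins a boson and a fermion); a height function $\mathrm{hgt}:V\to\mathbb{Z}$ with adjacent vertices at heights differing by $1$; a coloring of $E$ by colors $\{1,\dots,N\}$ such that each vertex is incident to exactly one edge of each color; an edge parity $\pi:E\to\mathbb{Z}_2$ (parity $1$ = dashed); such that every path with edge colors $(i,j)$, $i\ne j$, lies in a unique 4-cycle with colors $(i,j,i,j)$, each having an odd number of dashed edges. If $|V|=2^{N-k}$, $G$ is an $(N,k)$ Adinkra. Switching a vertex reverses the parity of its incident edges. Two Adinkras are equivalent if there is a bijection between their vertex sets preserving adjacency, edge colors and the boson/fermion bipartition which becomes parity-preserving after switching some set of vertices (heights need not be preserved). A doubly even $(N,k)$ code is a $k$-dimensional subspace of $\mathbb{Z}_2^N$ all of whose elements have Hamming weight $\equiv0\pmod4$. Labeling the vertices of an $N$-cube Adinkra by $\mathbb{Z}_2^N$ so that color-$i$ edges join $v$ and $v+e_i$, every $(N,k)$ Adinkra is equivalent to one obtained by identifying vertices whose labels differ by elements of some doubly even $(N,k)$ code $C$; this $C$ is the associated code. *)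

theory Defs
  imports Main
begin

text \<open>An Adinkra of dimension N: vertex set V, edges E (2-element subsets of V),
  edge colouring col, edge parity par (True = dashed), boson predicate bos,
  height function hgt.\<close>

definition adinkra ::
  "nat \<Rightarrow> 'v set \<Rightarrow> 'v set set \<Rightarrow> ('v set \<Rightarrow> nat) \<Rightarrow> ('v set \<Rightarrow> bool)
     \<Rightarrow> ('v \<Rightarrow> bool) \<Rightarrow> ('v \<Rightarrow> int) \<Rightarrow> bool" where
  "adinkra N V E col par bos hgt \<longleftrightarrow>
     finite V \<and> V \<noteq> {} \<and>
     E \<subseteq> {{u, v} | u v. u \<in> V \<and> v \<in> V \<and> u \<noteq> v} \<and>
     (\<forall>u\<in>V. \<forall>v\<in>V. (\<lambda>a b. {a, b} \<in> E)\<^sup>*\<^sup>* u v) \<and>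
     (\<forall>u v. {u, v} \<in> E \<longrightarrow> bos u \<noteq> bos v) \<and>
     (\<forall>u v. {u, v} \<in> E \<longrightarrow> \<bar>hgt u - hgt v\<bar> = 1) \<and>
     (\<forall>e\<in>E. col e \<in> {1..N}) \<and>
     (\<forall>v\<in>V. \<forall>i\<in>{1..N}. \<exists>!e. e \<in> E \<and> v \<in> e \<and> col e = i) \<and>
     (\<forall>u v w i j. {u, v} \<in> E \<and> {v, w} \<in> E \<and> col {u, v} = i \<and> col {v, w} = j \<and> i \<noteq> j \<longrightarrow>
        (\<exists>!x. {w, x} \<in> E \<and> col {w, x} = i \<and> {x, u} \<in> E \<and> col {x, u} = j) \<and>
        (\<forall>x. {w, x} \<in> E \<and> col {w, x} = i \<and> {x, u} \<in> E \<and> col {x, u} = j \<longrightarrow>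
           odd (length (filter par [{u, v}, {v, w}, {w, x}, {x, u}]))))"

definition NK_adinkra ::
  "nat \<Rightarrow> nat \<Rightarrow> 'v set \<Rightarrow> 'v set set \<Rightarrow> ('v set \<Rightarrow> nat) \<Rightarrow> ('v set \<Rightarrow> bool)
     \<Rightarrow> ('v \<Rightarrow> bool) \<Rightarrow> ('v \<Rightarrow> int) \<Rightarrow> bool" where
  "NK_adinkra N k V E col par bos hgt \<longleftrightarrow>
     adinkra N V E col par bos hgt \<and> k \<le> N \<and> card V = 2 ^ (N - k)"

text \<open>Equivalence of Adinkras (heights ignored): a bijection preserving adjacency,
  colours and the boson/fermion bipartition, which becomes parity preserving after
  switching the vertices of some set W.\<close>
definition adinkra_equiv ::
  "'v set \<Rightarrow> 'v set set \<Rightarrow> ('v set \<Rightarrow> nat) \<Rightarrow> ('v set \<Rightarrow> bool) \<Rightarrow> ('v \<Rightarrow> bool) \<Rightarrow>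
   'w set \<Rightarrow> 'w set set \<Rightarrow> ('w set \<Rightarrow> nat) \<Rightarrow> ('w set \<Rightarrow> bool) \<Rightarrow> ('w \<Rightarrow> bool) \<Rightarrow> bool" where
  "adinkra_equiv V E col par bos V' E' col' par' bos' \<longleftrightarrow>
     (\<exists>f W. bij_betw f V V' \<and> W \<subseteq> V \<and>
        (\<forall>u\<in>V. \<forall>v\<in>V. {u, v} \<in> E \<longleftrightarrow> {f u, f v} \<in> E') \<and>
        (\<forall>u\<in>V. \<forall>v\<in>V. {u, v} \<in> E \<longrightarrow>
            col' {f u, f v} = col {u, v} \<and>
            par' {f u, f v} = (par {u, v} \<noteq> ((u \<in> W) \<noteq> (v \<in> W)))) \<and>
        (\<forall>v\<in>V. bos' (f v) = bos v))"

definition klein_flip_degenerate ::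
  "'v set \<Rightarrow> 'v set set \<Rightarrow> ('v set \<Rightarrow> nat) \<Rightarrow> ('v set \<Rightarrow> bool) \<Rightarrow> ('v \<Rightarrow> bool) \<Rightarrow> bool" where
  "klein_flip_degenerate V E col par bos \<longleftrightarrow>
     \<not> adinkra_equiv V E col par bos V E col par (\<lambda>v. \<not> bos v)"

text \<open>Binary words of length N are identified with subsets of {1..N} (their supports);
  addition in Z_2^N is symmetric difference, Hamming weight is cardinality.\<close>
definition sym_diff :: "nat set \<Rightarrow> nat set \<Rightarrow> nat set" where
  "sym_diff S T = (S - T) \<union> (T - S)"

definition doubly_even_code :: "nat \<Rightarrow> nat \<Rightarrow> nat set set \<Rightarrow> bool" where
  "doubly_even_code N k C \<longleftrightarrow>
     C \<subseteq> Pow {1..N} \<and> {} \<in> C \<and> (\<forall>S\<in>C. \<forall>T\<in>C. sym_diff S T \<in> C) \<and>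
     card C = 2 ^ k \<and> (\<forall>S\<in>C. card S mod 4 = 0)"

text \<open>C is the associated code of G: C is a doubly even (N,k) code and G is equivalent to
  the quotient of the N-cube Adinkra (labels Pow {1..N}, colour-i edges joining S and
  S + e_i, bosons = even weight) by C.  Concretely: a labelling phi of the cube onto V
  identifying exactly the labels differing by a codeword, sending colour-i cube edges to
  colour-i edges of G, and respecting the bipartition.  (The dashing on the quotient is
  not specified by the construction, so it imposes no further constraint.)\<close>
definition associated_code ::
  "nat \<Rightarrow> nat \<Rightarrow> 'v set \<Rightarrow> 'v set set \<Rightarrow> ('v set \<Rightarrow> nat) \<Rightarrow> ('v \<Rightarrow> bool) \<Rightarrow> nat set set \<Rightarrow> bool" where
  "associated_code N k V E col bos C \<longleftrightarrow>
     doubly_even_code N k C \<and>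
     (\<exists>\<phi> :: nat set \<Rightarrow> 'v.
        \<phi> ` Pow {1..N} = V \<and>
        (\<forall>S\<in>Pow {1..N}. \<forall>T\<in>Pow {1..N}. \<phi> S = \<phi> T \<longleftrightarrow> sym_diff S T \<in> C) \<and>
        (\<forall>S\<in>Pow {1..N}. \<forall>i\<in>{1..N}.
            {\<phi> S, \<phi> (sym_diff S {i})} \<in> E \<and> col {\<phi> S, \<phi> (sym_diff S {i})} = i) \<and>
        (\<forall>S\<in>Pow {1..N}. bos (\<phi> S) \<longleftrightarrow> even (card S)))"

end

theory Submission
  imports Defs
begin

text \<open>Label the vertices of the Adinkra by the cube \<open>Pow {1..N}\<close> modulo the code \<open>C\<close>.
  An equivalence with the Klein flip preserves colours, so it lifts to a translation
  \<open>S \<mapsto> S + X\<close> of the cube with \<open>|X|\<close> odd (it exchanges bosons and fermions); it is parity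
  preserving after switching exactly when the cochain \<open>dash (S + X) i + dash S i\<close>, which has
  even squares, is the coboundary of a function \<open>w\<close> whose parity is constant on the fibres of
  the labelling.  Along any walk spanning a codeword \<open>c\<close> the two dashings differ by
  \<open>|X \<inter> c|\<close> mod 2, because every square of the Adinkra has an odd number of dashes.  If the
  all-ones word lies in \<open>C\<close>, taking \<open>c = {1..N}\<close> contradicts the oddness of \<open>|X|\<close>.  Otherwise
  \<open>C\<^sup>\<bottom>\<^sup>\<bottom> = C\<close> provides an odd word \<open>X\<close> orthogonal to \<open>C\<close>, a potential \<open>w\<close> is obtained by
  summing along monotone walks from \<open>{}\<close>, and orthogonality makes it compatible with \<open>C\<close>.
  Since the all-ones word has weight \<open>N\<close>, it can only lie in a doubly even code if \<open>4 dvd N\<close>.\<close>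

section \<open>Binary words and codes\<close>

lemma sym_diff_empty [simp]: "sym_diff A {} = A" "sym_diff {} A = A"
  and sym_diff_cancel [simp]: "sym_diff (sym_diff A B) B = A" "sym_diff A (sym_diff A B) = B"
  unfolding sym_diff_def by auto

lemma sym_diff_left_commute: "sym_diff (sym_diff S A) B = sym_diff (sym_diff S B) A"
  unfolding sym_diff_def by auto

lemma sym_diff_subset: "S \<subseteq> U \<Longrightarrow> T \<subseteq> U \<Longrightarrow> sym_diff S T \<subseteq> U"
  unfolding sym_diff_def by auto

lemma sym_diff_Pow: "S \<in> Pow U \<Longrightarrow> T \<subseteq> U \<Longrightarrow> sym_diff S T \<in> Pow U"
  unfolding sym_diff_def by auto

lemma sym_diff_singleton_Pow: "S \<in> Pow U \<Longrightarrow> i \<in> U \<Longrightarrow> sym_diff S {i} \<in> Pow U"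
  unfolding sym_diff_def by auto

lemma even_card_sym_diff:
  assumes "finite A" "finite B"
  shows "even (card (sym_diff A B)) \<longleftrightarrow> even (card A + card B)"
proof -
  have "sym_diff A B = (A \<union> B) - (A \<inter> B)"
    unfolding sym_diff_def by auto
  then have "card (sym_diff A B) + card (A \<inter> B) = card (A \<union> B)"
    using assms by (simp add: card_Diff_subset card_mono le_supI1)
  moreover have "card A + card B = card (A \<union> B) + card (A \<inter> B)"
    using card_Un_Int assms by blast
  ultimately show ?thesis by presburger
qed

lemma even_card_Int_sym_diff:
  "finite x \<Longrightarrow> even (card (x \<inter> sym_diff A B)) \<longleftrightarrow> even (card (x \<inter> A) + card (x \<inter> B))"
proof -
  assume "finite x"
  have "x \<inter> sym_diff A B = sym_diff (x \<inter> A) (x \<inter> B)"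
    unfolding sym_diff_def by auto
  then show ?thesis
    using even_card_sym_diff[of "x \<inter> A" "x \<inter> B"] \<open>finite x\<close> by simp
qed

lemma orth_restrict_to_avoiding_words:
  assumes U: "finite U" "a \<notin> U"
    and closed: "\<forall>S\<in>C. \<forall>T\<in>C. sym_diff S T \<in> C"
    and c0: "c0 \<in> C" "a \<in> c0"
    and y: "\<forall>x\<subseteq>insert a U. (\<forall>c\<in>C. even (card (x \<inter> c))) \<longrightarrow> even (card (x \<inter> y))"
    and x: "x \<subseteq> U" "\<forall>c\<in>C. a \<notin> c \<longrightarrow> even (card (x \<inter> c))"
  shows "even (card (x \<inter> (if a \<in> y then sym_diff y c0 else y)))"
proof -
  have fx: "finite x" and ax: "a \<notin> x"
    using x(1) U finite_subset by auto
  \<comment> \<open>adjoin \<open>a\<close> to \<open>x\<close> if needed to make it orthogonal to \<open>c0\<close> as well\<close>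
  define x' where "x' = (if even (card (x \<inter> c0)) then x else insert a x)"
  have fx': "finite x'" and x'U: "x' \<subseteq> insert a U"
    using fx x(1) unfolding x'_def by auto
  have x'_avoid: "x' \<inter> c = x \<inter> c" if "a \<notin> c" for c
    using that unfolding x'_def by auto
  have x'c0: "even (card (x' \<inter> c0))"
  proof (cases "even (card (x \<inter> c0))")
    case False
    have "insert a x \<inter> c0 = insert a (x \<inter> c0)"
      using c0 by auto
    then show ?thesis
      using False fx ax unfolding x'_def by simp
  qed (simp add: x'_def)
  have "even (card (x' \<inter> c))" if cC: "c \<in> C" for c
  proof (cases "a \<in> c")
    case True
    have "sym_diff c c0 \<in> C" "a \<notin> sym_diff c c0"
      using closed cC c0 True unfolding sym_diff_def by auto
    then have "even (card (x' \<inter> sym_diff c c0))"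
      using x(2) x'_avoid by simp
    then show ?thesis
      using even_card_Int_sym_diff[OF fx', of c c0] x'c0 by simp
  qed (use x(2) x'_avoid cC in simp)
  then have "even (card (x' \<inter> y))"
    using y x'U by blast
  then have "even (card (x' \<inter> (if a \<in> y then sym_diff y c0 else y)))"
    using x'c0 even_card_Int_sym_diff[OF fx', of y c0] by auto
  moreover have "a \<notin> (if a \<in> y then sym_diff y c0 else y)"
    using c0 unfolding sym_diff_def by auto
  ultimately show ?thesis
    using x'_avoid by simp
qed

lemma code_contains_double_orth:
  assumes "finite U" "C \<subseteq> Pow U" "{} \<in> C" "\<forall>S\<in>C. \<forall>T\<in>C. sym_diff S T \<in> C" "y \<subseteq> U"
    "\<forall>x\<subseteq>U. (\<forall>c\<in>C. even (card (x \<inter> c))) \<longrightarrow> even (card (x \<inter> y))"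
  shows "y \<in> C"
  using assms
proof (induction U arbitrary: C y rule: finite_induct)
  case (insert a U)
  show ?case
  proof (cases "\<exists>c0\<in>C. a \<in> c0")
    case True
    then obtain c0 where c0: "c0 \<in> C" "a \<in> c0" by blast
    define C' where "C' = {c\<in>C. a \<notin> c}"
    define y' where "y' = (if a \<in> y then sym_diff y c0 else y)"
    have "C' \<subseteq> Pow U" "{} \<in> C'"
      using insert.prems(1,2) unfolding C'_def by auto
    moreover have "\<forall>S\<in>C'. \<forall>T\<in>C'. sym_diff S T \<in> C'"
      using insert.prems(3) unfolding C'_def by (simp add: sym_diff_def)
    moreover have "y' \<subseteq> U"
    proof -
      have "c0 \<subseteq> insert a U"
        using c0(1) insert.prems(1) by auto
      then have "y' \<subseteq> insert a U" "a \<notin> y'"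
        using insert.prems(4) c0(2) sym_diff_subset unfolding y'_def by (auto simp: sym_diff_def)
      then show ?thesis by auto
    qed
    moreover have "\<forall>x\<subseteq>U. (\<forall>c\<in>C'. even (card (x \<inter> c))) \<longrightarrow> even (card (x \<inter> y'))"
      using orth_restrict_to_avoiding_words[OF insert.hyps insert.prems(3) c0 insert.prems(5)]
      unfolding C'_def y'_def by simp
    ultimately have "y' \<in> C'"
      by (rule insert.IH)
    then have "y' \<in> C"
      unfolding C'_def by simp
    then show ?thesis
      using c0(1) insert.prems(3) unfolding y'_def by (metis sym_diff_cancel(1))
  next
    case False
    have "even (card ({a} \<inter> y))"
      using False insert.prems(5) by auto
    then have "y \<subseteq> U"
      using insert.prems(4) by (cases "a \<in> y") auto
    moreover have "C \<subseteq> Pow U"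
      using False insert.prems(1) by auto
    moreover have "\<forall>x\<subseteq>U. (\<forall>c\<in>C. even (card (x \<inter> c))) \<longrightarrow> even (card (x \<inter> y))"
      using insert.prems(5) by blast
    ultimately show ?thesis
      using insert.IH insert.prems(2,3) by blast
  qed
qed simp

section \<open>Cochains on the cube\<close>

text \<open>A function \<open>D :: nat set \<Rightarrow> nat \<Rightarrow> nat\<close> is read as a \<open>\<int>\<^sub>2\<close>-valued 1-cochain on the
  cube \<open>Pow {1..N}\<close>: \<open>D S i\<close> is the weight of the edge from \<open>S\<close> to \<open>sym_diff S {i}\<close>.\<close>

fun walk_end :: "nat set \<Rightarrow> nat list \<Rightarrow> nat set" where
  "walk_end S [] = S"
| "walk_end S (i # L) = walk_end (sym_diff S {i}) L"

fun walk_sum :: "(nat set \<Rightarrow> nat \<Rightarrow> nat) \<Rightarrow> nat set \<Rightarrow> nat list \<Rightarrow> nat" where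
  "walk_sum D S [] = 0"
| "walk_sum D S (i # L) = D S i + walk_sum D (sym_diff S {i}) L"

definition odd_squares :: "nat \<Rightarrow> (nat set \<Rightarrow> nat \<Rightarrow> nat) \<Rightarrow> bool" where
  "odd_squares N D \<longleftrightarrow>
     (\<forall>S\<in>Pow {1..N}. \<forall>i\<in>{1..N}. D (sym_diff S {i}) i = D S i) \<and>
     (\<forall>S\<in>Pow {1..N}. \<forall>i\<in>{1..N}. \<forall>j\<in>{1..N}. i \<noteq> j \<longrightarrow>
        odd (D S i + D (sym_diff S {i}) j + D (sym_diff S {j}) i + D S j))"

lemma walk_end_distinct: "distinct L \<Longrightarrow> walk_end S L = sym_diff S (set L)"
  by (induction L arbitrary: S) (auto simp: sym_diff_def)

lemma walk_end_append: "walk_end S (L1 @ L2) = walk_end (walk_end S L1) L2"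
  by (induction L1 arbitrary: S) auto

lemma walk_sum_append: "walk_sum D S (L1 @ L2) = walk_sum D S L1 + walk_sum D (walk_end S L1) L2"
  by (induction L1 arbitrary: S) auto

lemma walk_sum_add: "walk_sum (\<lambda>T i. D1 T i + D2 T i) S L = walk_sum D1 S L + walk_sum D2 S L"
  by (induction L arbitrary: S) auto

lemma walk_sum_translate: "walk_sum (\<lambda>T i. D (sym_diff T X) i) S L = walk_sum D (sym_diff S X) L"
  by (induction L arbitrary: S) (auto simp: sym_diff_left_commute)

lemma walk_sum_coboundary:
  assumes "\<forall>T\<in>Pow {1..N}. \<forall>i\<in>{1..N}. even (e T i + w T + w (sym_diff T {i}))"
  shows "S \<subseteq> {1..N} \<Longrightarrow> set L \<subseteq> {1..N} \<Longrightarrow> even (walk_sum e S L + w S + w (walk_end S L))"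
proof (induction L arbitrary: S)
  case (Cons j L)
  then have "even (walk_sum e (sym_diff S {j}) L + w (sym_diff S {j}) + w (walk_end S (j # L)))"
    using sym_diff_singleton_Pow by auto
  moreover have "even (e S j + w S + w (sym_diff S {j}))"
    using assms Cons.prems by auto
  ultimately show ?case by simp presburger
qed simp

lemma odd_squares_translate:
  assumes D: "odd_squares N D" and X: "X \<subseteq> {1..N}"
  shows "odd_squares N (\<lambda>T i. D (sym_diff T X) i)"
  using D sym_diff_Pow[OF _ X] unfolding odd_squares_def sym_diff_left_commute[of _ _ X]
  by blast

text \<open>Moving the start of a walk across an edge of colour \<open>i\<close> changes its sum by one for every
  square it sweeps, i.e.\ for every step of a colour other than \<open>i\<close>.\<close>

lemma odd_squares_walk_sum_flip:
  assumes D: "odd_squares N D"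
  shows "S \<subseteq> {1..N} \<Longrightarrow> set L \<subseteq> {1..N} \<Longrightarrow> i \<in> {1..N} \<Longrightarrow>
    even (walk_sum D S L + walk_sum D (sym_diff S {i}) L + length (filter (\<lambda>j. j \<noteq> i) L)
          + D S i + D (walk_end S L) i)"
proof (induction L arbitrary: S)
  case (Cons j L)
  let ?S' = "sym_diff S {j}"
  have IH: "even (walk_sum D ?S' L + walk_sum D (sym_diff ?S' {i}) L
                  + length (filter (\<lambda>j. j \<noteq> i) L) + D ?S' i + D (walk_end ?S' L) i)"
    using Cons sym_diff_singleton_Pow by auto
  have swap: "sym_diff (sym_diff S {i}) {j} = sym_diff ?S' {i}"
    by (rule sym_diff_left_commute)
  show ?case
  proof (cases "j = i")
    case True
    then have "D ?S' i = D S i" "D (sym_diff S {i}) j = D S i"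
      using D Cons.prems unfolding odd_squares_def by auto
    then show ?thesis
      using IH True swap by simp presburger
  next
    case False
    then have "odd (D S i + D (sym_diff S {i}) j + D ?S' i + D S j)"
      using D Cons.prems unfolding odd_squares_def by auto
    then show ?thesis
      using IH False swap by simp presburger
  qed
qed simp

lemma walk_sum_flip_along_code:
  assumes D: "odd_squares N D" and inv: "\<forall>S\<in>Pow {1..N}. \<forall>i\<in>{1..N}. D (sym_diff S c) i = D S i"
    and L: "distinct L" "set L = c" and c: "c \<subseteq> {1..N}" "even (card c)"
    and T: "T \<subseteq> {1..N}" and i: "i \<in> {1..N}"
  shows "even (walk_sum D (sym_diff T {i}) L + walk_sum D T L + card ({i} \<inter> c))"
proof -
  have "even (walk_sum D T L + walk_sum D (sym_diff T {i}) L + length (filter (\<lambda>j. j \<noteq> i) L)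
              + D T i + D (walk_end T L) i)"
    using odd_squares_walk_sum_flip[OF D T _ i] L(2) c(1) by blast
  moreover have "D (walk_end T L) i = D T i"
    using inv T i unfolding walk_end_distinct[OF L(1)] L(2) by blast
  moreover have "length (filter (\<lambda>j. j \<noteq> i) L) + card ({i} \<inter> c) = card c"
  proof -
    have "length (filter (\<lambda>j. j \<noteq> i) L) = card (set (filter (\<lambda>j. j \<noteq> i) L))"
      using L(1) by (simp only: distinct_card distinct_filter)
    also have "set (filter (\<lambda>j. j \<noteq> i) L) = c - {i}"
      using L(2) by auto
    finally have len: "length (filter (\<lambda>j. j \<noteq> i) L) = card (c - {i})" .
    have "finite c"
      using c(1) finite_subset by blast
    show ?thesis
    proof (cases "i \<in> c")
      case True
      then show ?thesis
        using len card_Suc_Diff1[OF \<open>finite c\<close> True] by simp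
    qed (use len in simp)
  qed
  ultimately show ?thesis
    using c(2) by presburger
qed

lemma walk_sum_translate_along_code:
  assumes D: "odd_squares N D" and inv: "\<forall>S\<in>Pow {1..N}. \<forall>i\<in>{1..N}. D (sym_diff S c) i = D S i"
    and L: "distinct L" "set L = c" and c: "c \<subseteq> {1..N}" "even (card c)"
    and S: "S \<subseteq> {1..N}"
  shows "Y \<subseteq> {1..N} \<Longrightarrow> even (walk_sum D (sym_diff S Y) L + walk_sum D S L + card (Y \<inter> c))"
proof (induction Y rule: infinite_finite_induct)
  case (infinite Y)
  then show ?case
    by (meson finite_atLeastAtMost finite_subset)
next
  case (insert y Y)
  have IH: "even (walk_sum D (sym_diff S Y) L + walk_sum D S L + card (Y \<inter> c))"
    using insert.IH insert.prems by simp
  have "sym_diff S Y \<subseteq> {1..N}" "y \<in> {1..N}"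
    using S insert.prems sym_diff_subset by auto
  then have flip: "even (walk_sum D (sym_diff (sym_diff S Y) {y}) L + walk_sum D (sym_diff S Y) L
                         + card ({y} \<inter> c))"
    by (rule walk_sum_flip_along_code[OF D inv L c])
  have "sym_diff S (insert y Y) = sym_diff (sym_diff S Y) {y}"
    using insert.hyps unfolding sym_diff_def by auto
  moreover have "card (insert y Y \<inter> c) = card ({y} \<inter> c) + card (Y \<inter> c)"
  proof -
    have "insert y Y \<inter> c = ({y} \<inter> c) \<union> (Y \<inter> c)" by auto
    then show ?thesis
      using insert.hyps by (simp add: card_Un_disjoint disjoint_iff)
  qed
  ultimately show ?case
    using IH flip by presburger
qed simp

definition stair :: "nat \<Rightarrow> nat set \<Rightarrow> nat list" where
  "stair N S = filter (\<lambda>m. m \<in> S) [1..<N + 1]"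

lemma upt_split_at:
  assumes "i \<in> {1..N}"
  shows "[1..<N + 1] = [1..<i] @ i # [Suc i..<N + 1]"
proof -
  have "[1..<N + 1] = [1..<i] @ [i..<N + 1]"
    using assms upt_add_eq_append[of 1 i "N + 1 - i"] by simp
  then show ?thesis
    using assms by (simp add: upt_conv_Cons)
qed

text \<open>Summing the cochain \<open>D1 + D2\<close>, which has even squares, along the walks \<open>stair N S\<close>
  from \<open>{}\<close> yields a potential for it.  The stairs to \<open>S\<close> and to \<open>insert i S\<close> differ only in
  the \<open>i\<close>-step before the tail \<open>B\<close>; moving \<open>B\<close> across that edge sweeps the same squares for
  \<open>D1\<close> and for \<open>D2\<close>, so their odd contributions cancel.\<close>

lemma stair_sum_potential_insert:
  assumes D1: "odd_squares N D1" and D2: "odd_squares N D2"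
  defines "e \<equiv> \<lambda>S i. D1 S i + D2 S i"
  defines "w \<equiv> \<lambda>S. walk_sum e {} (stair N S)"
  assumes S: "S \<subseteq> {1..N}" and i: "i \<in> {1..N}" and iS: "i \<notin> S"
  shows "even (e S i + w S + w (sym_diff S {i}))"
proof -
  define A where "A = filter (\<lambda>m. m \<in> S) [1..<i]"
  define B where "B = filter (\<lambda>m. m \<in> S) [Suc i..<N + 1]"
  define SA where "SA = walk_end {} A"
  have ins: "sym_diff S {i} = insert i S"
    using iS unfolding sym_diff_def by auto
  have stair_S: "stair N S = A @ B"
    using iS unfolding stair_def A_def B_def upt_split_at[OF i] by simp
  have "filter (\<lambda>m. m \<in> insert i S) [1..<i] = A"
    "filter (\<lambda>m. m \<in> insert i S) [Suc i..<N + 1] = B"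
    unfolding A_def B_def by (auto intro: filter_cong)
  then have "stair N (sym_diff S {i}) = A @ i # B"
    unfolding ins stair_def upt_split_at[OF i] by simp
  then have w_flip: "w (sym_diff S {i}) = walk_sum e {} A + e SA i + walk_sum e (sym_diff SA {i}) B"
    by (simp add: w_def SA_def walk_sum_append)
  have w_S: "w S = walk_sum e {} A + walk_sum e SA B"
    by (simp add: w_def stair_S walk_sum_append SA_def)
  have "SA = set A"
    unfolding SA_def A_def by (simp add: walk_end_distinct)
  then have SA: "SA \<subseteq> {1..N}"
    using i unfolding A_def by auto
  have "walk_end {} (stair N S) = set (stair N S)"
    unfolding stair_def by (simp add: walk_end_distinct)
  also have "\<dots> = S"
    using S unfolding stair_def by auto
  finally have "walk_end {} (stair N S) = S" .
  then have "walk_end SA B = S"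
    unfolding stair_S walk_end_append SA_def .
  moreover have "set B \<subseteq> {1..N}"
    unfolding B_def by auto
  ultimately have
    "even (walk_sum D1 SA B + walk_sum D1 (sym_diff SA {i}) B + length (filter (\<lambda>j. j \<noteq> i) B) + D1 SA i + D1 S i)"
    "even (walk_sum D2 SA B + walk_sum D2 (sym_diff SA {i}) B + length (filter (\<lambda>j. j \<noteq> i) B) + D2 SA i + D2 S i)"
    using odd_squares_walk_sum_flip[OF D1 SA _ i] odd_squares_walk_sum_flip[OF D2 SA _ i] by simp_all
  then show ?thesis
    unfolding w_flip w_S e_def walk_sum_add by presburger
qed

lemma stair_sum_potential:
  assumes D1: "odd_squares N D1" and D2: "odd_squares N D2"
  defines "e \<equiv> \<lambda>S i. D1 S i + D2 S i"
  defines "w \<equiv> \<lambda>S. walk_sum e {} (stair N S)"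
  assumes S: "S \<subseteq> {1..N}" and i: "i \<in> {1..N}"
  shows "even (e S i + w S + w (sym_diff S {i}))"
proof (cases "i \<in> S")
  case True
  let ?S' = "sym_diff S {i}"
  have "i \<notin> ?S'" "?S' \<subseteq> {1..N}"
    using True S i unfolding sym_diff_def by auto
  moreover have "D1 ?S' i = D1 S i" "D2 ?S' i = D2 S i"
    using D1 D2 S i unfolding odd_squares_def by blast+
  ultimately show ?thesis
    using stair_sum_potential_insert[OF D1 D2 _ i, of ?S'] unfolding e_def w_def by simp presburger
next
  case False
  then show ?thesis
    using stair_sum_potential_insert[OF D1 D2 S i] unfolding e_def w_def by simp
qed

section \<open>Adinkras as quotients of the cube\<close>

locale adinkra_cube_quotient =
  fixes N k :: nat and V :: "'v set" and E :: "'v set set" and col :: "'v set \<Rightarrow> nat"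
    and par :: "'v set \<Rightarrow> bool" and bos :: "'v \<Rightarrow> bool" and hgt :: "'v \<Rightarrow> int"
    and C :: "nat set set" and phi :: "nat set \<Rightarrow> 'v"
  assumes adinkra: "adinkra N V E col par bos hgt"
    and code: "doubly_even_code N k C"
    and phi_onto: "phi ` Pow {1..N} = V"
    and phi_eq_iff: "\<forall>S\<in>Pow {1..N}. \<forall>T\<in>Pow {1..N}. phi S = phi T \<longleftrightarrow> sym_diff S T \<in> C"
    and phi_edge: "\<forall>S\<in>Pow {1..N}. \<forall>i\<in>{1..N}.
      {phi S, phi (sym_diff S {i})} \<in> E \<and> col {phi S, phi (sym_diff S {i})} = i"
    and phi_bos: "\<forall>S\<in>Pow {1..N}. bos (phi S) \<longleftrightarrow> even (card S)"
begin

lemma col_range: "e \<in> E \<Longrightarrow> col e \<in> {1..N}"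
  using adinkra unfolding adinkra_def by (elim conjE) (rule bspec)

lemma col_unique:
  assumes "v \<in> V" "i \<in> {1..N}"
  shows "\<exists>!e. e \<in> E \<and> v \<in> e \<and> col e = i"
proof -
  have "\<forall>v\<in>V. \<forall>i\<in>{1..N}. \<exists>!e. e \<in> E \<and> v \<in> e \<and> col e = i"
    using adinkra unfolding adinkra_def by (elim conjE)
  then show ?thesis
    using assms by (elim ballE) iprover+
qed

lemma square_odd_dashes:
  assumes "{u, v} \<in> E" "{v, w} \<in> E" "col {u, v} = i" "col {v, w} = j" "i \<noteq> j"
    and "{w, x} \<in> E" "col {w, x} = i" "{x, u} \<in> E" "col {x, u} = j"
  shows "odd (length (filter par [{u, v}, {v, w}, {w, x}, {x, u}]))"
proof -
  have square: "\<forall>u v w i j. {u, v} \<in> E \<and> {v, w} \<in> E \<and> col {u, v} = i \<and> col {v, w} = j \<and> i \<noteq> j \<longrightarrow>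
        (\<exists>!x. {w, x} \<in> E \<and> col {w, x} = i \<and> {x, u} \<in> E \<and> col {x, u} = j) \<and>
        (\<forall>x. {w, x} \<in> E \<and> col {w, x} = i \<and> {x, u} \<in> E \<and> col {x, u} = j \<longrightarrow>
           odd (length (filter par [{u, v}, {v, w}, {w, x}, {x, u}])))"
    using adinkra unfolding adinkra_def by (elim conjE)
  have "{u, v} \<in> E \<and> {v, w} \<in> E \<and> col {u, v} = i \<and> col {v, w} = j \<and> i \<noteq> j"
    using assms(1-5) by simp
  with square[THEN spec[of _ u], THEN spec[of _ v], THEN spec[of _ w], THEN spec[of _ i], THEN spec[of _ j]]
  have "\<forall>x. {w, x} \<in> E \<and> col {w, x} = i \<and> {x, u} \<in> E \<and> col {x, u} = j \<longrightarrow>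
               odd (length (filter par [{u, v}, {v, w}, {w, x}, {x, u}]))"
    by (elim impE conjE) (intro conjI)
  then show ?thesis
    using assms(6-9) by blast
qed

lemma code_subset: "C \<subseteq> Pow {1..N}"
  and code_empty: "{} \<in> C"
  and code_closed: "\<forall>S\<in>C. \<forall>T\<in>C. sym_diff S T \<in> C"
  and code_doubly_even: "c \<in> C \<Longrightarrow> card c mod 4 = 0"
  using code unfolding doubly_even_code_def by blast+

lemma code_even:
  assumes "c \<in> C"
  shows "even (card c)"
  using code_doubly_even[OF assms] by presburger

lemma phi_in_V: "S \<in> Pow {1..N} \<Longrightarrow> phi S \<in> V"
  using phi_onto by blast

lemma V_phi_cases:
  assumes "v \<in> V"
  obtains S where "S \<in> Pow {1..N}" "v = phi S"
  using assms phi_onto by blast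

lemma phi_translate_eq_iff:
  assumes "S \<in> Pow {1..N}" "T \<in> Pow {1..N}" "X \<subseteq> {1..N}"
  shows "phi (sym_diff S X) = phi (sym_diff T X) \<longleftrightarrow> phi S = phi T"
proof -
  have "sym_diff (sym_diff S X) (sym_diff T X) = sym_diff S T"
    unfolding sym_diff_def by auto
  then show ?thesis
    using phi_eq_iff assms sym_diff_Pow by simp
qed

lemma edge_colour_determines_end:
  assumes "a \<in> V" "{a, b} \<in> E" "{a, c} \<in> E" "col {a, b} = col {a, c}"
  shows "b = c"
proof -
  have uniq: "\<forall>y y'. (y \<in> E \<and> a \<in> y \<and> col y = col {a, b}) \<and> (y' \<in> E \<and> a \<in> y' \<and> col y' = col {a, b})
          \<longrightarrow> y = y'"
    using col_unique[OF assms(1) col_range[OF assms(2)]] by (elim alt_ex1E)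
  have "{a, b} = {a, c}"
    by (rule uniq[rule_format]) (use assms in auto)
  then show ?thesis
    by (metis doubleton_eq_iff)
qed

lemma edge_phi_iff:
  assumes S: "S \<in> Pow {1..N}"
  shows "{phi S, v} \<in> E \<longleftrightarrow> (\<exists>i\<in>{1..N}. v = phi (sym_diff S {i}))"
proof
  assume e: "{phi S, v} \<in> E"
  define i where "i = col {phi S, v}"
  have i: "i \<in> {1..N}"
    unfolding i_def by (rule col_range[OF e])
  then have "{phi S, phi (sym_diff S {i})} \<in> E" "col {phi S, phi (sym_diff S {i})} = col {phi S, v}"
    using phi_edge S unfolding i_def by blast+
  then have "v = phi (sym_diff S {i})"
    using edge_colour_determines_end[OF phi_in_V[OF S] e] by simp
  then show "\<exists>i\<in>{1..N}. v = phi (sym_diff S {i})"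
    using i by blast
next
  assume "\<exists>i\<in>{1..N}. v = phi (sym_diff S {i})"
  then obtain i where "i \<in> {1..N}" "v = phi (sym_diff S {i})" ..
  then show "{phi S, v} \<in> E"
    using phi_edge S by simp
qed

definition dash :: "nat set \<Rightarrow> nat \<Rightarrow> nat" where
  "dash S i = of_bool (par {phi S, phi (sym_diff S {i})})"

lemma odd_squares_dash: "odd_squares N dash"
  unfolding odd_squares_def
proof (intro conjI ballI impI)
  fix S i
  show "dash (sym_diff S {i}) i = dash S i"
    unfolding dash_def by (simp add: insert_commute)
next
  fix S i j assume S: "S \<in> Pow {1..N}" and i: "i \<in> {1..N}" and j: "j \<in> {1..N}" and ij: "i \<noteq> j"
  let ?u = "phi S" and ?v = "phi (sym_diff S {i})" and ?x = "phi (sym_diff S {j})"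
    and ?w = "phi (sym_diff (sym_diff S {i}) {j})"
  have Si: "sym_diff S {i} \<in> Pow {1..N}" and Sj: "sym_diff S {j} \<in> Pow {1..N}"
    using S i j sym_diff_singleton_Pow by auto
  have w_eq: "phi (sym_diff (sym_diff S {j}) {i}) = ?w"
    using sym_diff_left_commute[of S "{i}" "{j}"] by simp
  have uv: "{?u, ?v} \<in> E" "col {?u, ?v} = i"
    using phi_edge S i by blast+
  have vw: "{?v, ?w} \<in> E" "col {?v, ?w} = j"
    using phi_edge Si j by blast+
  have "{?x, phi (sym_diff (sym_diff S {j}) {i})} \<in> E" "col {?x, phi (sym_diff (sym_diff S {j}) {i})} = i"
    using phi_edge Sj i by blast+
  then have wx: "{?w, ?x} \<in> E" "col {?w, ?x} = i"
    unfolding w_eq by (simp_all add: insert_commute)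
  have "{?u, ?x} \<in> E" "col {?u, ?x} = j"
    using phi_edge S j by blast+
  then have xu': "{?x, ?u} \<in> E" "col {?x, ?u} = j"
    by (simp_all add: insert_commute)
  have "odd (length (filter par [{?u, ?v}, {?v, ?w}, {?w, ?x}, {?x, ?u}]))"
    by (rule square_odd_dashes[OF uv(1) vw(1) uv(2) vw(2) ij wx xu'])
  moreover have "length (filter par [{?u, ?v}, {?v, ?w}, {?w, ?x}, {?x, ?u}])
      = dash S i + dash (sym_diff S {i}) j + dash (sym_diff S {j}) i + dash S j"
    unfolding dash_def w_eq by (simp add: insert_commute)
  ultimately show "odd (dash S i + dash (sym_diff S {i}) j + dash (sym_diff S {j}) i + dash S j)"
    by simp
qed

lemma dash_translate_code:
  assumes c: "c \<in> C"
  shows "\<forall>S\<in>Pow {1..N}. \<forall>i\<in>{1..N}. dash (sym_diff S c) i = dash S i"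
proof (intro ballI)
  fix S i assume S: "S \<in> Pow {1..N}" and i: "i \<in> {1..N}"
  have c_sub: "c \<subseteq> {1..N}"
    using c code_subset by auto
  have "phi (sym_diff S c) = phi S"
  proof -
    have "sym_diff (sym_diff S c) S = c"
      unfolding sym_diff_def by auto
    then show ?thesis
      using phi_eq_iff sym_diff_Pow[OF S c_sub] S c by simp
  qed
  moreover have "phi (sym_diff (sym_diff S c) {i}) = phi (sym_diff S {i})"
  proof -
    have "sym_diff (sym_diff (sym_diff S c) {i}) (sym_diff S {i}) = c"
      unfolding sym_diff_def by auto
    moreover have "sym_diff (sym_diff S c) {i} \<in> Pow {1..N}" "sym_diff S {i} \<in> Pow {1..N}"
      using sym_diff_Pow[OF S c_sub] S i sym_diff_singleton_Pow by auto
    ultimately show ?thesis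
      using phi_eq_iff c by simp
  qed
  ultimately show "dash (sym_diff S c) i = dash S i"
    unfolding dash_def by simp
qed

lemma colour_preserving_map_is_translation:
  assumes f: "\<forall>u\<in>V. \<forall>v\<in>V. {u, v} \<in> E \<longrightarrow> {f u, f v} \<in> E \<and> col {f u, f v} = col {u, v}"
    and X: "X \<subseteq> {1..N}" "f (phi {}) = phi X"
  shows "S \<subseteq> {1..N} \<Longrightarrow> f (phi S) = phi (sym_diff S X)"
proof (induction S rule: infinite_finite_induct)
  case (infinite S)
  then show ?case
    by (meson finite_atLeastAtMost finite_subset)
next
  case (insert x S)
  have S: "S \<in> Pow {1..N}" and x: "x \<in> {1..N}"
    using insert.prems by auto
  have SX: "sym_diff S X \<in> Pow {1..N}"
    using sym_diff_Pow[OF S X(1)] .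
  have "{phi S, phi (sym_diff S {x})} \<in> E" "col {phi S, phi (sym_diff S {x})} = x"
    using phi_edge S x by blast+
  then have "{phi (sym_diff S X), f (phi (sym_diff S {x}))} \<in> E"
    "col {phi (sym_diff S X), f (phi (sym_diff S {x}))} = x"
    using f phi_in_V[OF S] phi_in_V[OF sym_diff_singleton_Pow[OF S x]] insert.IH S by auto
  moreover have "{phi (sym_diff S X), phi (sym_diff (sym_diff S X) {x})} \<in> E"
    "col {phi (sym_diff S X), phi (sym_diff (sym_diff S X) {x})} = x"
    using phi_edge SX x by blast+
  ultimately have "f (phi (sym_diff S {x})) = phi (sym_diff (sym_diff S X) {x})"
    using edge_colour_determines_end[OF phi_in_V[OF SX]] by metis
  moreover have "sym_diff S {x} = insert x S"
    using insert.hyps unfolding sym_diff_def by auto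
  ultimately show ?case
    by (metis sym_diff_left_commute)
qed (use X in simp)

definition translate :: "nat set \<Rightarrow> 'v \<Rightarrow> 'v" where
  "translate X v = phi (sym_diff (SOME S. S \<in> Pow {1..N} \<and> phi S = v) X)"

lemma translate_phi:
  assumes X: "X \<subseteq> {1..N}" and S: "S \<in> Pow {1..N}"
  shows "translate X (phi S) = phi (sym_diff S X)"
proof -
  define S' where "S' = (SOME S'. S' \<in> Pow {1..N} \<and> phi S' = phi S)"
  have "S' \<in> Pow {1..N} \<and> phi S' = phi S"
    unfolding S'_def by (rule someI[of _ S]) (use S in simp)
  then show ?thesis
    unfolding translate_def S'_def[symmetric] using phi_translate_eq_iff[OF _ S X] by simp
qed

lemma bij_betw_translate:
  assumes X: "X \<subseteq> {1..N}"
  shows "bij_betw (translate X) V V"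
proof (rule bij_betw_byWitness[where f' = "translate X"])
  show "\<forall>v\<in>V. translate X (translate X v) = v"
    using translate_phi[OF X] sym_diff_Pow[OF _ X] by (auto elim!: V_phi_cases)
  then show "\<forall>v\<in>V. translate X (translate X v) = v" .
  show "translate X ` V \<subseteq> V"
    using translate_phi[OF X] sym_diff_Pow[OF _ X] phi_in_V by (auto elim!: V_phi_cases)
  then show "translate X ` V \<subseteq> V" .
qed

lemma translate_edge_iff:
  assumes X: "X \<subseteq> {1..N}" and S: "S \<in> Pow {1..N}" and T: "T \<in> Pow {1..N}"
  shows "{phi (sym_diff S X), phi (sym_diff T X)} \<in> E \<longleftrightarrow> {phi S, phi T} \<in> E"
proof -
  have "phi T = phi (sym_diff S {i}) \<longleftrightarrow> phi (sym_diff T X) = phi (sym_diff (sym_diff S X) {i})"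
    if "i \<in> {1..N}" for i
    using phi_translate_eq_iff[OF T sym_diff_singleton_Pow[OF S that] X]
    by (simp add: sym_diff_left_commute eq_commute)
  then show ?thesis
    unfolding edge_phi_iff[OF S] edge_phi_iff[OF sym_diff_Pow[OF S X]] by blast
qed

lemma bos_translate_odd:
  assumes X: "X \<subseteq> {1..N}" "odd (card X)" and S: "S \<in> Pow {1..N}"
  shows "bos (translate X (phi S)) \<longleftrightarrow> \<not> bos (phi S)"
proof -
  have "finite S" "finite X"
    using S X(1) finite_subset by auto
  then show ?thesis
    using translate_phi[OF X(1) S] phi_bos S sym_diff_Pow[OF S X(1)] X(2) even_card_sym_diff[of S X]
    by auto
qed

text \<open>The data of an equivalence between the Adinkra and its Klein flip: the translation of the
  cube by a word \<open>X\<close> of odd weight, together with switching at the vertices \<open>phi S\<close> with \<open>w S\<close> odd.\<close>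

definition flip_switching :: "nat set \<Rightarrow> (nat set \<Rightarrow> nat) \<Rightarrow> bool" where
  "flip_switching X w \<longleftrightarrow> X \<subseteq> {1..N} \<and> odd (card X) \<and>
     (\<forall>S\<in>Pow {1..N}. \<forall>T\<in>Pow {1..N}. phi S = phi T \<longrightarrow> even (w S + w T)) \<and>
     (\<forall>S\<in>Pow {1..N}. \<forall>i\<in>{1..N}. even (dash (sym_diff S X) i + dash S i + w S + w (sym_diff S {i})))"

lemma flip_equiv_imp_switching:
  assumes "adinkra_equiv V E col par bos V E col par (\<lambda>v. \<not> bos v)"
  obtains X w where "flip_switching X w"
proof -
  obtain f W where bij: "bij_betw f V V"
    and adj: "\<forall>u\<in>V. \<forall>v\<in>V. {u, v} \<in> E \<longleftrightarrow> {f u, f v} \<in> E"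
    and col_par: "\<forall>u\<in>V. \<forall>v\<in>V. {u, v} \<in> E \<longrightarrow> col {f u, f v} = col {u, v} \<and>
                    par {f u, f v} = (par {u, v} \<noteq> ((u \<in> W) \<noteq> (v \<in> W)))"
    and flip: "\<forall>v\<in>V. (\<not> bos (f v)) = bos v"
    using assms unfolding adinkra_equiv_def by (elim exE conjE)
  have empty: "{} \<in> Pow {1..N}" by simp
  have "f (phi {}) \<in> V"
    using bij_betwE[OF bij] phi_in_V[OF empty] by blast
  then obtain X where X: "X \<in> Pow {1..N}" "f (phi {}) = phi X"
    by (elim V_phi_cases)
  have "\<forall>u\<in>V. \<forall>v\<in>V. {u, v} \<in> E \<longrightarrow> {f u, f v} \<in> E \<and> col {f u, f v} = col {u, v}"
    using adj col_par by blast
  then have f_phi: "f (phi S) = phi (sym_diff S X)" if "S \<in> Pow {1..N}" for S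
    using colour_preserving_map_is_translation X that by blast
  have "odd (card X)"
    using flip phi_in_V[OF empty] phi_bos X by auto
  define w :: "nat set \<Rightarrow> nat" where "w S = of_bool (phi S \<in> W)" for S
  have "flip_switching X w"
    unfolding flip_switching_def
  proof (intro conjI ballI impI)
    fix S i assume S: "S \<in> Pow {1..N}" and i: "i \<in> {1..N}"
    have Si: "sym_diff S {i} \<in> Pow {1..N}"
      using sym_diff_singleton_Pow[OF S i] .
    have "{phi S, phi (sym_diff S {i})} \<in> E"
      using phi_edge S i by blast
    then have "par {f (phi S), f (phi (sym_diff S {i}))} =
        (par {phi S, phi (sym_diff S {i})} \<noteq> ((phi S \<in> W) \<noteq> (phi (sym_diff S {i}) \<in> W)))"
      using col_par phi_in_V[OF S] phi_in_V[OF Si] by blast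
    moreover have "f (phi (sym_diff S {i})) = phi (sym_diff (sym_diff S X) {i})"
      using f_phi[OF Si] by (simp add: sym_diff_left_commute)
    ultimately show "even (dash (sym_diff S X) i + dash S i + w S + w (sym_diff S {i}))"
      unfolding dash_def w_def f_phi[OF S] by auto
  qed (use X \<open>odd (card X)\<close> w_def in auto)
  then show thesis ..
qed

lemma phi_in_odd_set_iff:
  assumes fibre: "\<forall>S\<in>Pow {1..N}. \<forall>T\<in>Pow {1..N}. phi S = phi T \<longrightarrow> even (w S + w T)"
    and S: "S \<in> Pow {1..N}"
  shows "phi S \<in> {phi T | T. T \<in> Pow {1..N} \<and> odd (w T)} \<longleftrightarrow> odd (w S)"
proof
  assume "phi S \<in> {phi T | T. T \<in> Pow {1..N} \<and> odd (w T)}"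
  then obtain T where T: "T \<in> Pow {1..N}" "odd (w T)" "phi S = phi T"
    by blast
  then show "odd (w S)"
    using fibre[rule_format, OF S T(1) T(3)] by presburger
qed (use S in blast)

lemma flip_switching_imp_equiv:
  assumes "flip_switching X w"
  shows "adinkra_equiv V E col par bos V E col par (\<lambda>v. \<not> bos v)"
proof -
  obtain X_sub: "X \<subseteq> {1..N}" and X_odd: "odd (card X)"
    and fibre: "\<forall>S\<in>Pow {1..N}. \<forall>T\<in>Pow {1..N}. phi S = phi T \<longrightarrow> even (w S + w T)"
    and coboundary: "\<forall>S\<in>Pow {1..N}. \<forall>i\<in>{1..N}.
                       even (dash (sym_diff S X) i + dash S i + w S + w (sym_diff S {i}))"
    using assms unfolding flip_switching_def by (elim conjE)
  define W where "W = {phi S | S. S \<in> Pow {1..N} \<and> odd (w S)}"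
  have W_iff: "phi S \<in> W \<longleftrightarrow> odd (w S)" if S: "S \<in> Pow {1..N}" for S
    using phi_in_odd_set_iff[OF fibre S] unfolding W_def .
  show ?thesis
    unfolding adinkra_equiv_def
  proof (intro exI[of _ "translate X"] exI[of _ W] conjI ballI impI)
    show "bij_betw (translate X) V V"
      using bij_betw_translate[OF X_sub] .
    show "W \<subseteq> V"
      unfolding W_def using phi_in_V by blast
  next
    fix u v assume "u \<in> V" "v \<in> V"
    then show "{u, v} \<in> E \<longleftrightarrow> {translate X u, translate X v} \<in> E"
      by (elim V_phi_cases) (simp add: translate_phi[OF X_sub] translate_edge_iff[OF X_sub])
  next
    fix u v assume "u \<in> V" "v \<in> V" and uv: "{u, v} \<in> E"
    then obtain S where S: "S \<in> Pow {1..N}" "u = phi S"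
      by (elim V_phi_cases)
    then obtain i where i: "i \<in> {1..N}" "v = phi (sym_diff S {i})"
      using uv edge_phi_iff by blast
    have Si: "sym_diff S {i} \<in> Pow {1..N}" and SX: "sym_diff S X \<in> Pow {1..N}"
      using sym_diff_singleton_Pow[OF S(1) i(1)] sym_diff_Pow[OF S(1) X_sub] .
    have tu: "translate X u = phi (sym_diff S X)"
      using translate_phi[OF X_sub S(1)] S(2) by simp
    have tv: "translate X v = phi (sym_diff (sym_diff S X) {i})"
      using translate_phi[OF X_sub Si] i(2) by (simp add: sym_diff_left_commute)
    have "col {u, v} = i" "col {phi (sym_diff S X), phi (sym_diff (sym_diff S X) {i})} = i"
      using phi_edge S i SX by blast+
    then show "col {translate X u, translate X v} = col {u, v}"
      unfolding tu tv by simp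
    have "even (dash (sym_diff S X) i + dash S i + w S + w (sym_diff S {i}))"
      using coboundary S(1) i(1) by blast
    then show "par {translate X u, translate X v} = (par {u, v} \<noteq> ((u \<in> W) \<noteq> (v \<in> W)))"
      unfolding tu tv unfolding S(2) i(2) W_iff[OF S(1)] W_iff[OF Si] dash_def by auto
  next
    fix v assume "v \<in> V"
    then show "(\<not> bos (translate X v)) = bos v"
      using bos_translate_odd[OF X_sub X_odd] by (elim V_phi_cases) simp
  qed
qed

text \<open>Summing the coboundary relation once around the cube, along a walk through every
  colour, contradicts the odd weight of \<open>X\<close> when the all-ones word closes that walk.\<close>

lemma no_flip_switching_if_all_ones_in_code:
  assumes all_ones: "{1..N} \<in> C"
  shows "\<not> flip_switching X w"
proof
  assume "flip_switching X w"
  then obtain X_sub: "X \<subseteq> {1..N}" and X_odd: "odd (card X)"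
    and fibre: "\<forall>S\<in>Pow {1..N}. \<forall>T\<in>Pow {1..N}. phi S = phi T \<longrightarrow> even (w S + w T)"
    and coboundary: "\<forall>S\<in>Pow {1..N}. \<forall>i\<in>{1..N}.
                       even (dash (sym_diff S X) i + dash S i + w S + w (sym_diff S {i}))"
    unfolding flip_switching_def by (elim conjE)
  let ?L = "[1..<N + 1]"
  have L: "distinct ?L" "set ?L = {1..N}"
    by auto
  have "even (walk_sum (\<lambda>T i. dash (sym_diff T X) i + dash T i) {} ?L + w {} + w (walk_end {} ?L))"
    using walk_sum_coboundary[OF coboundary, of "{}" ?L] L by simp
  moreover have "walk_end {} ?L = {1..N}"
    using walk_end_distinct[OF L(1)] L(2) by simp
  moreover have "even (w {1..N} + w {})"
    using fibre phi_eq_iff all_ones by simp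
  moreover have "even (walk_sum dash X ?L + walk_sum dash {} ?L + card (X \<inter> {1..N}))"
    using walk_sum_translate_along_code[OF odd_squares_dash dash_translate_code[OF all_ones] L order_refl
        code_even[OF all_ones], of "{}" X] X_sub by simp
  moreover have "X \<inter> {1..N} = X"
    using X_sub by blast
  ultimately show False
    using X_odd unfolding walk_sum_add walk_sum_translate by simp
qed

lemma odd_word_orth_code:
  assumes "{1..N} \<notin> C"
  obtains X where "X \<subseteq> {1..N}" "\<forall>c\<in>C. even (card (X \<inter> c))" "odd (card X)"
proof -
  have "\<not> (\<forall>x\<subseteq>{1..N}. (\<forall>c\<in>C. even (card (x \<inter> c))) \<longrightarrow> even (card (x \<inter> {1..N})))"
    using code_contains_double_orth[of "{1..N}" C "{1..N}"] code_subset code_empty code_closed assms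
    by auto
  then obtain X where "X \<subseteq> {1..N}" "\<forall>c\<in>C. even (card (X \<inter> c))" "odd (card (X \<inter> {1..N}))"
    by blast
  moreover have "X \<inter> {1..N} = X"
    using calculation(1) by blast
  ultimately show thesis
    using that by simp
qed

lemma flip_switching_exists_if_all_ones_not_in_code:
  assumes "{1..N} \<notin> C"
  obtains X w where "flip_switching X w"
proof -
  obtain X where X_sub: "X \<subseteq> {1..N}" and X_orth: "\<forall>c\<in>C. even (card (X \<inter> c))"
    and X_odd: "odd (card X)"
    using odd_word_orth_code[OF assms] by blast
  define e where "e T i = dash (sym_diff T X) i + dash T i" for T i
  define w where "w S = walk_sum e {} (stair N S)" for S
  have coboundary: "\<forall>S\<in>Pow {1..N}. \<forall>i\<in>{1..N}. even (e S i + w S + w (sym_diff S {i}))"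
    using stair_sum_potential[OF odd_squares_translate[OF odd_squares_dash X_sub] odd_squares_dash]
    unfolding e_def w_def by simp
  have "even (w S + w T)" if S: "S \<in> Pow {1..N}" and T: "T \<in> Pow {1..N}" and ST: "phi S = phi T" for S T
  proof -
    define c where "c = sym_diff S T"
    have c: "c \<in> C"
      using phi_eq_iff S T ST unfolding c_def by blast
    then have c_sub: "c \<subseteq> {1..N}"
      using code_subset by blast
    define L where "L = sorted_list_of_set c"
    have "finite c"
      using c_sub finite_subset by blast
    then have L: "distinct L" "set L = c"
      unfolding L_def by simp_all
    have "even (walk_sum e S L + w S + w (walk_end S L))"
      using walk_sum_coboundary[OF coboundary] S L(2) c_sub by simp
    moreover have "walk_end S L = T"
      unfolding walk_end_distinct[OF L(1)] L(2) c_def by simp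
    moreover have "even (walk_sum dash (sym_diff S X) L + walk_sum dash S L + card (X \<inter> c))"
      using walk_sum_translate_along_code[OF odd_squares_dash dash_translate_code[OF c] L c_sub
          code_even[OF c]] S X_sub by simp
    moreover have "walk_sum e S L = walk_sum dash (sym_diff S X) L + walk_sum dash S L"
      unfolding e_def walk_sum_add walk_sum_translate ..
    ultimately show ?thesis
      using X_orth c by simp
  qed
  then have "flip_switching X w"
    unfolding flip_switching_def using X_sub X_odd coboundary unfolding e_def by blast
  then show thesis ..
qed

lemma flip_equiv_iff_all_ones_not_in_code:
  "adinkra_equiv V E col par bos V E col par (\<lambda>v. \<not> bos v) \<longleftrightarrow> {1..N} \<notin> C"
  by (metis flip_equiv_imp_switching flip_switching_imp_equiv no_flip_switching_if_all_ones_in_code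
      flip_switching_exists_if_all_ones_not_in_code)

end

theorem mainTheorem7:
  fixes N k :: nat and V :: "'v set" and E :: "'v set set"
    and col :: "'v set \<Rightarrow> nat" and par :: "'v set \<Rightarrow> bool"
    and bos :: "'v \<Rightarrow> bool" and hgt :: "'v \<Rightarrow> int" and C :: "nat set set"
  assumes "NK_adinkra N k V E col par bos hgt"
    and "associated_code N k V E col bos C"
  shows "(klein_flip_degenerate V E col par bos \<longleftrightarrow> {1..N} \<in> C)
         \<and> ({1..N} \<in> C \<longrightarrow> N mod 4 = 0)"
proof -
  have "\<exists>phi :: nat set \<Rightarrow> 'v. adinkra_cube_quotient N k V E col par bos hgt C phi"
    using assms unfolding NK_adinkra_def associated_code_def adinkra_cube_quotient_def
    by (elim conjE exE) (intro exI conjI; assumption)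
  then obtain phi :: "nat set \<Rightarrow> 'v" where "adinkra_cube_quotient N k V E col par bos hgt C phi" ..
  then interpret adinkra_cube_quotient N k V E col par bos hgt C phi .
  have "{1..N} \<in> C \<longrightarrow> N mod 4 = 0"
    using code_doubly_even by fastforce
  then show ?thesis
    unfolding klein_flip_degenerate_def flip_equiv_iff_all_ones_not_in_code by blast
qed

end
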